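(* Let $(\Omega,\mathcal{F},P)$ be a probability space with expectation $E$, and let $\{Z_i\}_{i=1}^\infty$ and $\{K_i\}_{i=1}^\infty$ be two i.i.d. sequences of real random variables on it, with the sequence $\{Z_i\}_{i=1}^\infty$ independent of the sequence $\{K_i\}_{i=1}^\infty$. Assume $E[|Z_1|^2]=\sigma^2>0$, $E[K_1]=0$, $E[|K_1|^2]=k^2>0$, and $E[|Z_1|^{2+2\alpha}]\vee E[|K_1|^{2+2\alpha}]<\infty$ for a given $\alpha\in(0,1]$. Let $\tilde{\mathcal{F}}_0:=\{\emptyset,\Omega\}$ and $\tilde{\mathcal{F}}_i:=\sigma(Z_1,\dots,Z_i,K_1,\dots,K_i)$ for $i\ge 1$. Let $0<\underline{\zeta}<\overline{\zeta}$ be constants and let $\tilde{\Sigma}[\underline{\zeta},\overline{\zeta}]$ be the collection of all sequences $\zeta=\{\zeta_i\}_{i=1}^\infty$ that are predictable with respect to $\{\tilde{\mathcal{F}}_i\}_{i\ge0}$ (i.e. $\zeta_i$ is $\tilde{\mathcal{F}}_{i-1}$-measurable for each $i\ge1$) and take values in $[\underline{\zeta},\overline{\zeta}]$. For $\zeta\in\tilde{\Sigma}[\underline{\zeta},\overline{\zeta}]$ and $n\in\mathbb{N}$, set $Z_i^\zeta:=(\zeta_iZ_i+K_i)^2$ and $W_{n,n}^\zeta:=\frac{Z_1^\zeta+\cdots+Z_n^\zeta}{n}$. Then for every Lipschitz continuous $\varphi:\mathbb{R}\to\mathbb{R}$ with Lipschitz constant $L_\varphi$ and every $n\in\mathbb{N}$,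 \[ \Bigg|\sup_{\zeta\in\tilde{\Sigma}[\underline{\zeta},\overline{\zeta}]}E[\varphi(W_{n,n}^\zeta)]-\max_{r\in[\sigma^2\underline{\zeta}^2+k^2,\ \sigma^2\overline{\zeta}^2+k^2]}\varphi(r)\Bigg|\leq L_\varphi\left(\frac{4\tilde{C}_\alpha}{n^\alpha}\right)^{\frac{1}{1+\alpha}}, \] where $\tilde{C}_\alpha:=\sup_{\zeta\in\tilde{\Sigma}[\underline{\zeta},\overline{\zeta}]} E[|Z_1^\zeta|^{1+\alpha}]$ satisfies $\tilde C_\alpha\leq 8\overline{\zeta}^{2+2\alpha} E[|Z_1|^{2+2\alpha}]+8E[|K_1|^{2+2\alpha}]<\infty$.
   Context: $a\vee b$ denotes $\max(a,b)$. A predictable sequence has $\zeta_1$ measurable with respect to the trivial $\sigma$-algebra, i.e. $\zeta_1$ is a constant in $[\underline\zeta,\overline\zeta]$. *)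

theory Defs
  imports "HOL-Probability.Probability"
begin

definition Ftil :: "'a measure \<Rightarrow> (nat \<Rightarrow> 'a \<Rightarrow> real) \<Rightarrow> (nat \<Rightarrow> 'a \<Rightarrow> real) \<Rightarrow> nat \<Rightarrow> 'a set set" where
  "Ftil M Z K i = sigma_sets (space M)
     (\<Union>j\<in>{1..i}. {Z j -` B \<inter> space M | B. B \<in> sets borel} \<union> {K j -` B \<inter> space M | B. B \<in> sets borel})"

definition SigmaTil :: "'a measure \<Rightarrow> (nat \<Rightarrow> 'a \<Rightarrow> real) \<Rightarrow> (nat \<Rightarrow> 'a \<Rightarrow> real) \<Rightarrow> real \<Rightarrow> real \<Rightarrow> (nat \<Rightarrow> 'a \<Rightarrow> real) set" where
  "SigmaTil M Z K lo hi = {\<zeta>. \<forall>i\<ge>1.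
       (\<forall>B\<in>sets borel. \<zeta> i -` B \<inter> space M \<in> Ftil M Z K (i - 1))
     \<and> (\<forall>\<omega>\<in>space M. lo \<le> \<zeta> i \<omega> \<and> \<zeta> i \<omega> \<le> hi)}"

definition Zzeta :: "(nat \<Rightarrow> 'a \<Rightarrow> real) \<Rightarrow> (nat \<Rightarrow> 'a \<Rightarrow> real) \<Rightarrow> (nat \<Rightarrow> 'a \<Rightarrow> real) \<Rightarrow> nat \<Rightarrow> 'a \<Rightarrow> real" where
  "Zzeta Z K \<zeta> i \<omega> = (\<zeta> i \<omega> * Z i \<omega> + K i \<omega>)^2"

definition Wnn :: "(nat \<Rightarrow> 'a \<Rightarrow> real) \<Rightarrow> (nat \<Rightarrow> 'a \<Rightarrow> real) \<Rightarrow> (nat \<Rightarrow> 'a \<Rightarrow> real) \<Rightarrow> nat \<Rightarrow> 'a \<Rightarrow> real" where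
  "Wnn Z K \<zeta> n \<omega> = (\<Sum>i=1..n. Zzeta Z K \<zeta> i \<omega>) / real n"

end

(* Write D_i = Z_i^zeta - m(zeta_i) with m(c) = c^2 sigma^2 + k^2 = E[(c Z_1 + K_1)^2], and
   S_j = D_1 + ... + D_j.  As (Z_i, K_i) is independent of the past and distributed like
   (Z_1, K_1) while zeta_i is predictable, the past can be frozen: this bounds E|Z_i^zeta|^p by
   C_alpha and makes D_i orthogonal to every function of the past.  For p = 1 + alpha the
   inequality |a + b|^p <= |a|^p + p sgn(a) |a|^(p-1) b + 2 |b|^p then yields
   E|S_n|^p <= 4 n C_alpha, and Jensen's inequality gives E|W_n - M_n| <= (4 C_alpha / n^alpha)^(1/p)
   for the predictable average M_n = (m(zeta_1) + ... + m(zeta_n)) / n, which takes values in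
   [sigma^2 lo^2 + k^2, sigma^2 hi^2 + k^2].  Lipschitz continuity of phi bounds E phi(W_n) above
   by the maximum of phi on that interval up to the error, and the constant controls zeta = c,
   for which M_n is the constant m(c), give the matching lower bound. *)

theory Submission
  imports Defs
begin

section \<open>Elementary inequalities\<close>

lemma powr_add_le_add_powr:
  fixes q x y :: real
  assumes q: "0 \<le> q" "q \<le> 1" and x: "0 \<le> x" and y: "0 \<le> y"
  shows "(x + y) powr q \<le> x powr q + y powr q"
proof (cases "x + y = 0")
  case True
  then show ?thesis using x y by auto
next
  case False
  define s where "s = x + y"
  have s: "s > 0" using False x y s_def by auto
  have le_powr: "u \<le> u powr q" if "0 \<le> u" "u \<le> 1" for u :: real
    using powr_mono'[of q 1 u] that q by (cases "u = 0") auto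
  have "1 = x / s + y / s" using s by (simp add: s_def add_divide_distrib[symmetric])
  also have "\<dots> \<le> (x / s) powr q + (y / s) powr q"
    using le_powr[of "x / s"] le_powr[of "y / s"] x y s by (simp add: s_def)
  also have "\<dots> = (x powr q + y powr q) / s powr q"
    by (simp add: powr_divide add_divide_distrib)
  finally show ?thesis using s by (simp add: s_def field_simps)
qed

lemma one_plus_powr_le:
  fixes p t :: real
  assumes p: "1 < p" "p \<le> 2" and t: "0 \<le> t"
  shows "(1 + t) powr p \<le> 1 + p * t + 2 * t powr p"
proof -
  define f where "f x = 2 * x powr p - (1 + x) powr p + 1 + p * x" for x
  have "f 0 \<le> f t"
  proof (rule DERIV_nonneg_imp_increasing_open[OF t])
    fix x :: real assume x: "0 < x" "x < t"
    have d: "DERIV f x :> 2 * (p * x powr (p - 1)) - p * (1 + x) powr (p - 1) + p"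
      unfolding f_def using x by (auto intro!: derivative_eq_intros)
    have "(1 + x) powr (p - 1) \<le> 1 + x powr (p - 1)"
      using powr_add_le_add_powr[of "p - 1" 1 x] p x by simp
    then have "p * (1 + x) powr (p - 1) \<le> p * (1 + x powr (p - 1))"
      using p by (intro mult_left_mono) auto
    moreover have "0 \<le> p * x powr (p - 1)" using p by simp
    ultimately have "0 \<le> 2 * (p * x powr (p - 1)) - p * (1 + x) powr (p - 1) + p"
      by (simp add: algebra_simps)
    with d show "\<exists>y. DERIV f x :> y \<and> 0 \<le> y" by blast
  next
    show "continuous_on {0..t} f"
      unfolding f_def by (intro continuous_intros continuous_on_powr') (use p in auto)
  qed
  then show ?thesis using p by (simp add: f_def)
qed

lemma one_minus_powr_le:
  fixes p s :: real
  assumes p: "1 < p" "p \<le> 2" and s: "0 \<le> s" "s \<le> 1"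
  shows "(1 - s) powr p \<le> 1 - p * s + 2 * s powr p"
proof -
  define f where "f x = 2 * x powr p - (1 - x) powr p + 1 - p * x" for x
  have "f 0 \<le> f s"
  proof (rule DERIV_nonneg_imp_increasing_open[OF s(1)])
    fix x :: real assume x: "0 < x" "x < s"
    have d: "DERIV f x :> 2 * (p * x powr (p - 1)) + p * (1 - x) powr (p - 1) - p"
      unfolding f_def using x s by (auto intro!: derivative_eq_intros)
    have "1 \<le> x powr (p - 1) + (1 - x) powr (p - 1)"
      using powr_add_le_add_powr[of "p - 1" x "1 - x"] p x s by simp
    then have "p * 1 \<le> p * (x powr (p - 1) + (1 - x) powr (p - 1))"
      using p by (intro mult_left_mono) auto
    moreover have "0 \<le> p * x powr (p - 1)" using p by simp
    ultimately have "0 \<le> 2 * (p * x powr (p - 1)) + p * (1 - x) powr (p - 1) - p"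
      by (simp add: algebra_simps)
    with d show "\<exists>y. DERIV f x :> y \<and> 0 \<le> y" by blast
  next
    show "continuous_on {0..s} f"
      unfolding f_def by (intro continuous_intros continuous_on_powr') (use p s in auto)
  qed
  then show ?thesis using p by (simp add: f_def)
qed

lemma minus_one_powr_le:
  fixes p s :: real
  assumes p: "1 < p" "p \<le> 2" and s: "1 \<le> s"
  shows "(s - 1) powr p \<le> 1 - p * s + 2 * s powr p"
proof -
  define f where "f x = 2 * x powr p - (x - 1) powr p + 1 - p * x" for x
  have "f 1 \<le> f s"
  proof (rule DERIV_nonneg_imp_increasing_open[OF s])
    fix x :: real assume x: "1 < x" "x < s"
    have d: "DERIV f x :> 2 * (p * x powr (p - 1)) - p * (x - 1) powr (p - 1) - p"
      unfolding f_def using x by (auto intro!: derivative_eq_intros)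
    have "(x - 1) powr (p - 1) \<le> x powr (p - 1)" "1 \<le> x powr (p - 1)"
      using p x by (auto intro: powr_mono2 ge_one_powr_ge_zero)
    then have "p * (1 + (x - 1) powr (p - 1)) \<le> p * (2 * x powr (p - 1))"
      using p by (intro mult_left_mono) auto
    then have "0 \<le> 2 * (p * x powr (p - 1)) - p * (x - 1) powr (p - 1) - p"
      by (simp add: algebra_simps)
    with d show "\<exists>y. DERIV f x :> y \<and> 0 \<le> y" by blast
  next
    show "continuous_on {1..s} f"
      unfolding f_def by (intro continuous_intros continuous_on_powr') (use p s in auto)
  qed
  moreover have "0 \<le> f 1" using p by (simp add: f_def)
  ultimately show ?thesis by (simp add: f_def)
qed

lemma abs_one_plus_powr_le:
  fixes p t :: real
  assumes p: "1 < p" "p \<le> 2"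
  shows "\<bar>1 + t\<bar> powr p \<le> 1 + p * t + 2 * \<bar>t\<bar> powr p"
proof -
  consider "0 \<le> t" | "-1 \<le> t" "t < 0" | "t < -1" by linarith
  then show ?thesis
  proof cases
    case 1
    then show ?thesis using one_plus_powr_le[OF p] by simp
  next
    case 2
    then show ?thesis using one_minus_powr_le[OF p, of "-t"] by simp
  next
    case 3
    then have "\<bar>1 + t\<bar> = - t - 1" "\<bar>t\<bar> = - t" by auto
    then show ?thesis
      using 3 minus_one_powr_le[OF p, of "-t"] by (simp only: mult_minus_right diff_minus_eq_add)
  qed
qed

text \<open>\<^term>\<open>p * signed_powr (p - 1) a\<close> is the derivative of \<^term>\<open>\<bar>a\<bar> powr p\<close>, so the
  following lemma is a second-order Taylor bound.\<close>

definition signed_powr :: "real \<Rightarrow> real \<Rightarrow> real" where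
  "signed_powr q s = sgn s * \<bar>s\<bar> powr q"

lemma borel_measurable_signed_powr [measurable]: "signed_powr q \<in> borel_measurable borel"
  unfolding signed_powr_def by measurable

lemma abs_add_powr_le:
  fixes p a b :: real
  assumes p: "1 < p" "p \<le> 2"
  shows "\<bar>a + b\<bar> powr p \<le> \<bar>a\<bar> powr p + p * signed_powr (p - 1) a * b + 2 * \<bar>b\<bar> powr p"
proof (cases "a = 0")
  case True
  then show ?thesis by (simp add: signed_powr_def)
next
  case False
  define t where "t = b / a"
  have b: "b = a * t" using False t_def by simp
  have "\<bar>a + b\<bar> powr p = \<bar>a\<bar> powr p * \<bar>1 + t\<bar> powr p"
    by (simp add: b abs_mult[symmetric] powr_mult[symmetric] algebra_simps)
  also have "\<dots> \<le> \<bar>a\<bar> powr p * (1 + p * t + 2 * \<bar>t\<bar> powr p)"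
    by (rule mult_left_mono[OF abs_one_plus_powr_le[OF p]]) simp
  also have "\<dots> = \<bar>a\<bar> powr p + p * (\<bar>a\<bar> powr p * t) + 2 * \<bar>b\<bar> powr p"
    by (simp add: b abs_mult powr_mult algebra_simps)
  also have "\<bar>a\<bar> powr p * t = signed_powr (p - 1) a * b"
    using False by (auto simp: b signed_powr_def sgn_if powr_diff field_simps)
  finally show ?thesis by (simp add: algebra_simps)
qed

lemma abs_signed_powr_mult_le:
  fixes p s d :: real
  assumes p: "1 \<le> p"
  shows "\<bar>signed_powr (p - 1) s * d\<bar> \<le> \<bar>s\<bar> powr p + \<bar>d\<bar> powr p"
proof -
  have "\<bar>signed_powr (p - 1) s * d\<bar> \<le> \<bar>s\<bar> powr (p - 1) * \<bar>d\<bar>"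
    by (auto simp: signed_powr_def abs_mult sgn_if)
  also have "\<dots> \<le> max \<bar>s\<bar> \<bar>d\<bar> powr (p - 1) * max \<bar>s\<bar> \<bar>d\<bar>"
    using p by (intro mult_mono powr_mono2) auto
  also have "\<dots> = max \<bar>s\<bar> \<bar>d\<bar> powr p"
    by (cases "max \<bar>s\<bar> \<bar>d\<bar> = 0") (simp_all add: powr_diff)
  also have "\<dots> \<le> \<bar>s\<bar> powr p + \<bar>d\<bar> powr p"
    by (simp add: max_def add_increasing add_increasing2)
  finally show ?thesis .
qed

lemma abs_diff_powr_le:
  fixes p x m :: real
  assumes "0 \<le> p" "0 \<le> x" "0 \<le> m"
  shows "\<bar>x - m\<bar> powr p \<le> x powr p + m powr p"
proof -
  have "\<bar>x - m\<bar> powr p \<le> max x m powr p"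
    using assms by (intro powr_mono2) auto
  also have "\<dots> \<le> x powr p + m powr p"
    by (simp add: max_def add_increasing add_increasing2)
  finally show ?thesis .
qed

lemma add_powr_le_two_powr:
  fixes q x y :: real
  assumes q: "1 \<le> q" and x: "0 \<le> x" and y: "0 \<le> y"
  shows "(x + y) powr q \<le> 2 powr (q - 1) * (x powr q + y powr q)"
proof -
  have two: "1 \<le> 2 powr (q - 1)" using q by (simp add: ge_one_powr_ge_zero)
  consider "x = 0" | "y = 0" | "0 < x" "0 < y" using x y by linarith
  then show ?thesis
  proof cases
    case 1
    then show ?thesis using two by (simp add: mult_le_cancel_right1)
  next
    case 2
    then show ?thesis using two by (simp add: mult_le_cancel_right1)
  next
    case 3
    have "((1 - 1 / 2) *\<^sub>R x + (1 / 2) *\<^sub>R y) powr q \<le> (1 - 1 / 2) * x powr q + (1 / 2) * y powr q"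
      by (rule convex_onD[OF powr_convex[OF q]]) (use 3 in auto)
    then have "((x + y) / 2) powr q \<le> (x powr q + y powr q) / 2"
      by (simp add: add_divide_distrib)
    then have "(x + y) powr q / (2 * 2 powr (q - 1)) \<le> (x powr q + y powr q) / 2"
      using x y by (simp add: powr_divide powr_diff)
    then show ?thesis by (simp add: field_simps)
  qed
qed

lemma square_affine_powr_le:
  fixes c z k h a :: real
  assumes c: "\<bar>c\<bar> \<le> h" and a: "0 < a" "a \<le> 1"
  shows "\<bar>(c * z + k)\<^sup>2\<bar> powr (1 + a)
    \<le> 8 * h powr (2 + 2 * a) * \<bar>z\<bar> powr (2 + 2 * a) + 8 * \<bar>k\<bar> powr (2 + 2 * a)"
proof -
  have h: "0 \<le> h" using c by simp
  have "\<bar>(c * z + k)\<^sup>2\<bar> powr (1 + a) = (\<bar>c * z + k\<bar> powr 2) powr (1 + a)"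
    by (simp add: powr_numeral)
  also have "\<dots> = \<bar>c * z + k\<bar> powr (2 + 2 * a)"
    by (simp only: powr_powr) (simp add: algebra_simps)
  also have "\<dots> \<le> (h * \<bar>z\<bar> + \<bar>k\<bar>) powr (2 + 2 * a)"
    using a c abs_triangle_ineq[of "c * z" k] mult_right_mono[OF c, of "\<bar>z\<bar>"]
    by (intro powr_mono2) (auto simp: abs_mult)
  also have "\<dots> \<le> 2 powr (1 + 2 * a) * ((h * \<bar>z\<bar>) powr (2 + 2 * a) + \<bar>k\<bar> powr (2 + 2 * a))"
    using add_powr_le_two_powr[of "2 + 2 * a" "h * \<bar>z\<bar>" "\<bar>k\<bar>"] a h by simp
  also have "\<dots> \<le> 2 powr 3 * ((h * \<bar>z\<bar>) powr (2 + 2 * a) + \<bar>k\<bar> powr (2 + 2 * a))"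
    using a by (intro mult_right_mono powr_mono) auto
  finally show ?thesis using h by (simp add: powr_mult algebra_simps)
qed

lemma abs_powr_le_one_plus:
  fixes x r s :: real
  assumes "0 \<le> r" "r \<le> s"
  shows "\<bar>x\<bar> powr r \<le> 1 + \<bar>x\<bar> powr s"
proof (cases "\<bar>x\<bar> \<le> 1")
  case True
  then have "\<bar>x\<bar> powr r \<le> 1" using assms powr_mono2[of r "\<bar>x\<bar>" 1] by simp
  then show ?thesis by (simp add: add_increasing2)
next
  case False
  then have "\<bar>x\<bar> powr r \<le> \<bar>x\<bar> powr s" using assms by (intro powr_mono) auto
  then show ?thesis by simp
qed

lemma powr_tangent_le:
  fixes p \<mu> x :: real
  assumes p: "1 \<le> p" and \<mu>: "0 < \<mu>" and x: "0 \<le> x"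
  shows "\<mu> powr p + p * \<mu> powr (p - 1) * (x - \<mu>) \<le> x powr p"
proof (cases "x = 0")
  case True
  have "\<mu> powr p + p * \<mu> powr (p - 1) * (x - \<mu>) = (1 - p) * \<mu> powr p"
    using True \<mu> by (simp add: powr_diff field_simps)
  also have "\<dots> \<le> 0" using p by (simp add: mult_nonpos_nonneg)
  finally show ?thesis using True by simp
next
  case False
  have "p * \<mu> powr (p - 1) * (x - \<mu>) \<le> x powr p - \<mu> powr p"
    by (rule convex_on_imp_above_tangent[OF powr_convex[OF p]])
       (use \<mu> x False in \<open>auto intro!: derivative_eq_intros simp: interior_open\<close>)
  then show ?thesis by simp
qed

lemma powr_rate_eq:
  fixes n C a :: real
  assumes n: "0 < n" and C: "0 \<le> C" and a: "0 < a"
  shows "(4 * n * C) powr (1 / (1 + a)) / n = (4 * C / n powr a) powr (1 / (1 + a))"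
proof -
  have "n = n powr (1 / (1 + a)) * n powr (a / (1 + a))"
    using n a by (simp add: powr_add[symmetric] add_divide_distrib[symmetric])
  then have "(4 * n * C) powr (1 / (1 + a)) / n
      = (4 * C) powr (1 / (1 + a)) * n powr (1 / (1 + a)) / (n powr (1 / (1 + a)) * n powr (a / (1 + a)))"
    using C n powr_mult[of "4 * C" n "1 / (1 + a)"] by (simp add: ac_simps)
  also have "\<dots> = (4 * C) powr (1 / (1 + a)) / n powr (a / (1 + a))"
    using n by simp
  also have "\<dots> = (4 * C / n powr a) powr (1 / (1 + a))"
    using C n by (simp add: powr_divide powr_powr)
  finally show ?thesis .
qed

section \<open>Probabilistic tools\<close>

lemma integrable_bound_pointwise:
  fixes f g :: "'a \<Rightarrow> real"
  assumes "integrable M f" "g \<in> borel_measurable M" "\<And>x. x \<in> space M \<Longrightarrow> \<bar>g x\<bar> \<le> f x"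
  shows "integrable M g"
  using assms by (intro Bochner_Integration.integrable_bound[OF assms(1,2)] AE_I2) force

lemma integrable_lipschitz_comp:
  fixes \<phi> :: "real \<Rightarrow> real"
  assumes lip: "L-lipschitz_on UNIV \<phi>" and "finite_measure M" and X: "integrable M X"
  shows "integrable M (\<lambda>x. \<phi> (X x))"
proof (rule integrable_bound_pointwise)
  interpret finite_measure M by fact
  show "integrable M (\<lambda>x. \<bar>\<phi> 0\<bar> + L * \<bar>X x\<bar>)" using X by simp
  have "\<phi> \<in> borel_measurable borel"
    using lipschitz_on_continuous_on[OF lip] by (rule borel_measurable_continuous_onI)
  then show "(\<lambda>x. \<phi> (X x)) \<in> borel_measurable M" using X by measurable
  fix x
  show "\<bar>\<phi> (X x)\<bar> \<le> \<bar>\<phi> 0\<bar> + L * \<bar>X x\<bar>"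
    using lipschitz_onD[OF lip, of "X x" 0] by (simp add: dist_real_def)
qed

lemma abs_integral_lipschitz_diff_le:
  fixes \<phi> :: "real \<Rightarrow> real"
  assumes lip: "L-lipschitz_on UNIV \<phi>"
    and int: "integrable M (\<lambda>x. \<phi> (X x))" "integrable M (\<lambda>x. \<phi> (Y x))"
      "integrable M (\<lambda>x. \<bar>X x - Y x\<bar>)"
  shows "\<bar>(\<integral>x. \<phi> (X x) \<partial>M) - (\<integral>x. \<phi> (Y x) \<partial>M)\<bar> \<le> L * (\<integral>x. \<bar>X x - Y x\<bar> \<partial>M)"
proof -
  have "\<bar>(\<integral>x. \<phi> (X x) \<partial>M) - (\<integral>x. \<phi> (Y x) \<partial>M)\<bar> = \<bar>\<integral>x. \<phi> (X x) - \<phi> (Y x) \<partial>M\<bar>"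
    using int by simp
  also have "\<dots> \<le> (\<integral>x. \<bar>\<phi> (X x) - \<phi> (Y x)\<bar> \<partial>M)"
    by (rule integral_abs_bound)
  also have "\<dots> \<le> (\<integral>x. L * \<bar>X x - Y x\<bar> \<partial>M)"
    using int lipschitz_onD[OF lip] by (intro integral_mono) (auto simp: dist_real_def)
  finally show ?thesis by simp
qed

lemma abs_SUP_diff_le:
  fixes E :: "'b \<Rightarrow> real" and \<phi> :: "'c \<Rightarrow> real"
  assumes S: "S \<noteq> {}" and T: "T \<noteq> {}" "bdd_above (\<phi> ` T)"
    and upper: "\<And>s. s \<in> S \<Longrightarrow> E s \<le> (SUP t\<in>T. \<phi> t) + \<epsilon>"
    and lower: "\<And>t. t \<in> T \<Longrightarrow> \<exists>s\<in>S. \<phi> t \<le> E s + \<epsilon>"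
  shows "\<bar>(SUP s\<in>S. E s) - (SUP t\<in>T. \<phi> t)\<bar> \<le> \<epsilon>"
proof -
  have bddE: "bdd_above (E ` S)" using upper by (rule bdd_aboveI2)
  have "(SUP s\<in>S. E s) \<le> (SUP t\<in>T. \<phi> t) + \<epsilon>" using S upper by (rule cSUP_least)
  moreover have "(SUP t\<in>T. \<phi> t) \<le> (SUP s\<in>S. E s) + \<epsilon>"
  proof (rule cSUP_least[OF T(1)])
    fix t assume "t \<in> T"
    then obtain s where "s \<in> S" "\<phi> t \<le> E s + \<epsilon>" using lower by blast
    moreover have "E s \<le> (SUP s\<in>S. E s)" by (rule cSUP_upper[OF \<open>s \<in> S\<close> bddE])
    ultimately show "\<phi> t \<le> (SUP s\<in>S. E s) + \<epsilon>" by linarith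
  qed
  ultimately show ?thesis by linarith
qed

lemma bdd_above_lipschitz_image_Icc:
  fixes \<phi> :: "real \<Rightarrow> real"
  assumes "L-lipschitz_on UNIV \<phi>"
  shows "bdd_above (\<phi> ` {a..b})"
  using continuous_on_subset[OF lipschitz_on_continuous_on[OF assms], of "{a..b}"]
  by (intro bounded_imp_bdd_above compact_imp_bounded compact_continuous_image) auto

text \<open>No integrability hypothesis is needed: a non-integrable function has integral \<open>0\<close>.\<close>

lemma (in prob_space) integral_le_nonneg_const:
  fixes f :: "'a \<Rightarrow> real"
  assumes "\<And>x. x \<in> space M \<Longrightarrow> f x \<le> c" "0 \<le> c"
  shows "(\<integral>x. f x \<partial>M) \<le> c"
  using assms integral_le_const[of f c] by (cases "integrable M f") (auto simp: not_integrable_integral_eq)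

lemma (in prob_space) powr_expectation_le:
  fixes X :: "'a \<Rightarrow> real"
  assumes p: "1 \<le> p" and X: "integrable M X" "integrable M (\<lambda>x. X x powr p)"
    and nonneg: "\<And>x. x \<in> space M \<Longrightarrow> 0 \<le> X x"
  shows "(\<integral>x. X x \<partial>M) powr p \<le> (\<integral>x. X x powr p \<partial>M)"
proof -
  define \<mu> where "\<mu> = (\<integral>x. X x \<partial>M)"
  have "0 \<le> \<mu>" unfolding \<mu>_def using nonneg by simp
  show ?thesis
  proof (cases "\<mu> = 0")
    case True
    then show ?thesis by (simp add: \<mu>_def[symmetric])
  next
    case False
    with \<open>0 \<le> \<mu>\<close> have \<mu>: "0 < \<mu>" by simp
    have "\<mu> powr p = (\<integral>x. \<mu> powr p + p * \<mu> powr (p - 1) * (X x - \<mu>) \<partial>M)"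
      using X(1) by (simp add: \<mu>_def prob_space)
    also have "\<dots> \<le> (\<integral>x. X x powr p \<partial>M)"
      using X nonneg powr_tangent_le[OF p \<mu>] by (intro integral_mono) auto
    finally show ?thesis by (simp add: \<mu>_def)
  qed
qed

lemma (in prob_space) integrable_abs_powr_le:
  fixes X :: "'a \<Rightarrow> real"
  assumes "integrable M (\<lambda>x. \<bar>X x\<bar> powr s)" "X \<in> borel_measurable M" "0 \<le> r" "r \<le> s"
  shows "integrable M (\<lambda>x. \<bar>X x\<bar> powr r)"
proof (rule integrable_bound_pointwise)
  show "integrable M (\<lambda>x. 1 + \<bar>X x\<bar> powr s)" using assms(1) by simp
  show "(\<lambda>x. \<bar>X x\<bar> powr r) \<in> borel_measurable M" using assms(2) by measurable
qed (use abs_powr_le_one_plus[OF assms(3,4)] in simp)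

lemma
  fixes f :: "'b \<Rightarrow> 'c::{banach, second_countable_topology}"
  assumes eq: "distr M N X = distr M N Y" and X: "X \<in> measurable M N" and Y: "Y \<in> measurable M N"
    and f: "f \<in> borel_measurable N"
  shows identically_distributed_integrable_iff:
      "integrable M (\<lambda>x. f (X x)) \<longleftrightarrow> integrable M (\<lambda>x. f (Y x))"
    and identically_distributed_integral_eq: "(\<integral>x. f (X x) \<partial>M) = (\<integral>x. f (Y x) \<partial>M)"
  using integrable_distr_eq[OF X f] integrable_distr_eq[OF Y f]
    integral_distr[OF X f] integral_distr[OF Y f] eq by simp_all

lemma (in prob_space) integral_indep_var_eq:
  fixes V Y :: "'a \<Rightarrow> 'b::second_countable_topology" and F :: "'b \<Rightarrow> 'b \<Rightarrow> real"
  assumes ind: "indep_var borel V borel Y" and F: "case_prod F \<in> borel_measurable borel"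
    and int: "integrable M (\<lambda>\<omega>. F (V \<omega>) (Y \<omega>))"
  shows "(\<integral>\<omega>. F (V \<omega>) (Y \<omega>) \<partial>M) = (\<integral>\<omega>. (\<integral>y. F (V \<omega>) y \<partial>distr M borel Y) \<partial>M)"
proof -
  have V: "V \<in> borel_measurable M" and Y: "Y \<in> borel_measurable M"
    using indep_var_rv1[OF ind] indep_var_rv2[OF ind] by auto
  let ?PV = "distr M borel V" and ?PY = "distr M borel Y"
  interpret PY: prob_space ?PY by (rule prob_space_distr[OF Y])
  interpret P: pair_prob_space ?PV ?PY
    by (intro pair_prob_space.intro pair_sigma_finite.intro prob_space_imp_sigma_finite
        prob_space_distr V Y)
  have eq: "?PV \<Otimes>\<^sub>M ?PY = distr M (borel \<Otimes>\<^sub>M borel) (\<lambda>\<omega>. (V \<omega>, Y \<omega>))"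
    using ind indep_var_distribution_eq by auto
  have Fm: "case_prod F \<in> borel_measurable (borel \<Otimes>\<^sub>M borel)" using F by (simp add: borel_prod)
  have VY: "(\<lambda>\<omega>. (V \<omega>, Y \<omega>)) \<in> measurable M (borel \<Otimes>\<^sub>M borel)"
    using V Y by (auto intro: measurable_Pair)
  have intP: "integrable (?PV \<Otimes>\<^sub>M ?PY) (case_prod F)"
    unfolding eq using integrable_distr_eq[OF VY Fm] int by simp
  have FmY: "case_prod F \<in> borel_measurable (borel \<Otimes>\<^sub>M ?PY)"
    by (subst measurable_cong_sets[OF sets_pair_measure_cong[OF refl sets_distr] refl]) (rule Fm)
  have "(\<integral>\<omega>. F (V \<omega>) (Y \<omega>) \<partial>M) = integral\<^sup>L (?PV \<Otimes>\<^sub>M ?PY) (case_prod F)"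
    unfolding eq using integral_distr[OF VY Fm] by simp
  also have "\<dots> = (\<integral>v. (\<integral>y. F v y \<partial>?PY) \<partial>?PV)"
    using P.integral_fst'[OF intP] by simp
  also have "\<dots> = (\<integral>\<omega>. (\<integral>y. F (V \<omega>) y \<partial>?PY) \<partial>M)"
    using PY.borel_measurable_lebesgue_integral[OF FmY] by (intro integral_distr[OF V]) simp
  finally show ?thesis .
qed

lemma (in prob_space) indep_set_sigma_sets_disjoint:
  assumes ind: "indep_vars M' X I" and AB: "A \<inter> B = {}" "A \<subseteq> I" "B \<subseteq> I"
  shows "indep_set (sigma_sets (space M) (\<Union>i\<in>A. {X i -` S \<inter> space M | S. S \<in> sets (M' i)}))
                   (sigma_sets (space M) (\<Union>i\<in>B. {X i -` S \<inter> space M | S. S \<in> sets (M' i)}))"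
proof -
  define G where "G i = {X i -` S \<inter> space M | S. S \<in> sets (M' i)}" for i
  have "indep_sets G (A \<union> B)"
    using ind AB unfolding indep_vars_def2 G_def by (auto intro: indep_sets_mono_index)
  moreover have "A \<union> B = (\<Union>b\<in>UNIV. case_bool A B b)" by (auto simp: UNIV_bool)
  ultimately have "indep_sets G (\<Union>b\<in>UNIV. case_bool A B b)" by (simp only:)
  then have "indep_sets (\<lambda>b. sigma_sets (space M) (\<Union>i\<in>case_bool A B b. G i)) UNIV"
  proof (rule indep_sets_collect_sigma)
    show "Int_stable (G i)" for i
      unfolding G_def Int_stable_def
    proof clarsimp
      fix S T assume "S \<in> sets (M' i)" "T \<in> sets (M' i)"
      then show "\<exists>C. X i -` S \<inter> space M \<inter> (X i -` T \<inter> space M) = X i -` C \<inter> space M \<and> C \<in> sets (M' i)"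
        by (intro exI[of _ "S \<inter> T"]) auto
    qed
    show "disjoint_family_on (case_bool A B) UNIV"
      using AB by (auto simp: disjoint_family_on_def split: bool.split)
  qed
  moreover have "(\<lambda>b. sigma_sets (space M) (\<Union>i\<in>case_bool A B b. G i))
      = case_bool (sigma_sets (space M) (\<Union>i\<in>A. G i)) (sigma_sets (space M) (\<Union>i\<in>B. G i))"
    by (rule ext) (simp split: bool.split)
  ultimately show ?thesis unfolding indep_set_def G_def by simp
qed

lemma (in prob_space) indep_var_of_indep_set:
  fixes V Y :: "'a \<Rightarrow> 'b::topological_space"
  assumes ind: "indep_set (sets N1) (sets N2)"
    and sub: "subalgebra M N1" "subalgebra M N2"
    and V: "V \<in> borel_measurable N1" and Y: "Y \<in> borel_measurable N2"
  shows "indep_var borel V borel Y"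
  unfolding indep_var_eq
proof (intro conjI)
  show "random_variable borel V" "random_variable borel Y"
    using measurable_from_subalg[OF sub(1) V] measurable_from_subalg[OF sub(2) Y] by auto
  have "sigma_sets (space M) {V -` S \<inter> space M |S. S \<in> sets borel} \<subseteq> sets N1"
    using V sub(1) by (intro sets.sigma_sets_subset') (auto simp: subalgebra_def dest: measurable_sets)
  moreover have "sigma_sets (space M) {Y -` S \<inter> space M |S. S \<in> sets borel} \<subseteq> sets N2"
    using Y sub(2) by (intro sets.sigma_sets_subset') (auto simp: subalgebra_def dest: measurable_sets)
  ultimately show "indep_set (sigma_sets (space M) {V -` S \<inter> space M |S. S \<in> sets borel})
     (sigma_sets (space M) {Y -` S \<inter> space M |S. S \<in> sets borel})"
    using ind unfolding indep_set_def
    by (rule_tac indep_sets_mono_sets) (auto split: bool.split)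
qed

lemma (in prob_space) integrable_low_moments:
  fixes X :: "'a \<Rightarrow> real"
  assumes "integrable M (\<lambda>x. \<bar>X x\<bar> powr s)" and X: "X \<in> borel_measurable M" and "2 \<le> s"
  shows "integrable M X" "integrable M (\<lambda>x. (X x)\<^sup>2)"
proof -
  have "integrable M (\<lambda>x. \<bar>X x\<bar> powr 1)"
    by (rule integrable_abs_powr_le[OF assms(1) X]) (use assms(3) in auto)
  then show "integrable M X" using X by (rule_tac integrable_abs_cancel) simp_all
  have "integrable M (\<lambda>x. \<bar>X x\<bar> powr 2)"
    by (rule integrable_abs_powr_le[OF assms(1) X]) (use assms(3) in auto)
  then show "integrable M (\<lambda>x. (X x)\<^sup>2)" by (simp add: powr_numeral)
qed

lemma (in prob_space) integral_abs_le_moment_root: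
  fixes X :: "'a \<Rightarrow> real"
  assumes p: "1 \<le> p" and X: "X \<in> borel_measurable M" "integrable M (\<lambda>x. \<bar>X x\<bar> powr p)"
  shows "integrable M (\<lambda>x. \<bar>X x\<bar>)"
    and "(\<integral>x. \<bar>X x\<bar> \<partial>M) \<le> (\<integral>x. \<bar>X x\<bar> powr p \<partial>M) powr (1 / p)"
proof -
  have "integrable M (\<lambda>x. \<bar>X x\<bar> powr 1)"
    by (rule integrable_abs_powr_le[OF X(2,1)]) (use p in auto)
  then show int: "integrable M (\<lambda>x. \<bar>X x\<bar>)" by simp
  have "(\<integral>x. \<bar>X x\<bar> \<partial>M) = ((\<integral>x. \<bar>X x\<bar> \<partial>M) powr p) powr (1 / p)"
    using p by (simp add: powr_powr)
  also have "\<dots> \<le> (\<integral>x. \<bar>X x\<bar> powr p \<partial>M) powr (1 / p)"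
    using p int X(2) by (intro powr_mono2 powr_expectation_le) auto
  finally show "(\<integral>x. \<bar>X x\<bar> \<partial>M) \<le> (\<integral>x. \<bar>X x\<bar> powr p \<partial>M) powr (1 / p)" .
qed

section \<open>The filtration generated by the observations\<close>

lemma SigmaTil_bounds:
  "\<zeta> \<in> SigmaTil M Z K lo hi \<Longrightarrow> 1 \<le> i \<Longrightarrow> \<omega> \<in> space M \<Longrightarrow> lo \<le> \<zeta> i \<omega> \<and> \<zeta> i \<omega> \<le> hi"
  unfolding SigmaTil_def by auto

lemma const_mem_SigmaTil:
  assumes "lo \<le> c" "c \<le> hi"
  shows "(\<lambda>i \<omega>. c) \<in> SigmaTil M Z K lo hi"
proof -
  have "{} \<in> Ftil M Z K j" "space M \<in> Ftil M Z K j" for j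
    unfolding Ftil_def by (auto intro: sigma_sets.Empty sigma_sets_top)
  then have "(\<lambda>\<omega>. c) -` B \<inter> space M \<in> Ftil M Z K j" for B j
    by (cases "c \<in> B") auto
  then show ?thesis using assms unfolding SigmaTil_def by auto
qed

locale indep_ZK = prob_space M for M :: "'a measure" +
  fixes Z K :: "nat \<Rightarrow> 'a \<Rightarrow> real"
  assumes Z_measurable: "\<And>i. i \<ge> 1 \<Longrightarrow> Z i \<in> borel_measurable M"
    and K_measurable: "\<And>i. i \<ge> 1 \<Longrightarrow> K i \<in> borel_measurable M"
    and indep_Z_K: "indep_vars (\<lambda>_. borel) (\<lambda>x. case x of Inl i \<Rightarrow> Z i | Inr i \<Rightarrow> K i)
                      (Inl ` {1..} \<union> Inr ` {1..})"
begin

text \<open>As in the independence hypothesis, the index \<^term>\<open>Inl i\<close> stands for \<open>Z i\<close> and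
  \<^term>\<open>Inr i\<close> for \<open>K i\<close>.\<close>

definition obs_events :: "nat + nat \<Rightarrow> 'a set set" where
  "obs_events i = {case_sum Z K i -` B \<inter> space M | B. B \<in> sets borel}"

definition obs_sigma :: "(nat + nat) set \<Rightarrow> 'a measure" where
  "obs_sigma A = sigma (space M) (\<Union>i\<in>A. obs_events i)"

definition past :: "nat \<Rightarrow> 'a measure" where
  "past j = obs_sigma (Inl ` {1..j} \<union> Inr ` {1..j})"

lemma obs_events_subset: "obs_events i \<subseteq> Pow (space M)"
  unfolding obs_events_def by auto

lemma sets_obs_sigma: "sets (obs_sigma A) = sigma_sets (space M) (\<Union>i\<in>A. obs_events i)"
  unfolding obs_sigma_def using obs_events_subset by (intro sets_measure_of) auto

lemma space_obs_sigma [simp]: "space (obs_sigma A) = space M"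
  unfolding obs_sigma_def using obs_events_subset by (intro space_measure_of) auto

lemma space_past [simp]: "space (past j) = space M"
  by (simp add: past_def)

lemma sets_past: "sets (past j) = Ftil M Z K j"
  unfolding past_def sets_obs_sigma Ftil_def obs_events_def by (simp add: UN_Un_distrib)

lemma measurable_obs_sigma: "i \<in> A \<Longrightarrow> case_sum Z K i \<in> borel_measurable (obs_sigma A)"
  by (auto simp: measurable_def sets_obs_sigma obs_events_def intro!: sigma_sets.Basic)

lemma subalgebra_obs_sigma:
  assumes "A \<subseteq> Inl ` {1..} \<union> Inr ` {1..}"
  shows "subalgebra M (obs_sigma A)"
proof -
  have "case_sum Z K i \<in> borel_measurable M" if "i \<in> A" for i
    using that assms Z_measurable K_measurable by auto
  then have "(\<Union>i\<in>A. obs_events i) \<subseteq> sets M"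
    unfolding obs_events_def by (auto intro: measurable_sets)
  then show ?thesis
    unfolding subalgebra_def sets_obs_sigma by (simp add: sets.sigma_sets_subset)
qed

lemma subalgebra_past: "subalgebra M (past j)"
  unfolding past_def by (rule subalgebra_obs_sigma) auto

lemma subalgebra_past_mono:
  assumes "j \<le> m"
  shows "subalgebra (past m) (past j)"
proof -
  have "(\<Union>i\<in>Inl ` {1..j} \<union> Inr ` {1..j}. obs_events i) \<subseteq> (\<Union>i\<in>Inl ` {1..m} \<union> Inr ` {1..m}. obs_events i)"
    using assms by (intro UN_mono) auto
  then show ?thesis
    unfolding subalgebra_def past_def sets_obs_sigma by (simp add: sigma_sets_subseteq)
qed

lemma Z_measurable_past: "1 \<le> i \<Longrightarrow> i \<le> j \<Longrightarrow> Z i \<in> borel_measurable (past j)"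
  using measurable_obs_sigma[of "Inl i"] unfolding past_def by simp

lemma K_measurable_past: "1 \<le> i \<Longrightarrow> i \<le> j \<Longrightarrow> K i \<in> borel_measurable (past j)"
  using measurable_obs_sigma[of "Inr i"] unfolding past_def by simp

lemma indep_var_obs_sigma:
  fixes V Y :: "'a \<Rightarrow> 'b::topological_space"
  assumes AB: "A \<inter> B = {}" "A \<union> B \<subseteq> Inl ` {1..} \<union> Inr ` {1..}"
    and V: "V \<in> borel_measurable (obs_sigma A)" and Y: "Y \<in> borel_measurable (obs_sigma B)"
  shows "indep_var borel V borel Y"
proof (rule indep_var_of_indep_set[OF _ subalgebra_obs_sigma subalgebra_obs_sigma V Y])
  show "indep_set (sets (obs_sigma A)) (sets (obs_sigma B))"
    unfolding sets_obs_sigma obs_events_def using indep_set_sigma_sets_disjoint[OF indep_Z_K] AB by auto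
qed (use AB in auto)

lemma indep_var_Z_K: "1 \<le> k \<Longrightarrow> indep_var borel (Z k) borel (K k)"
  using indep_var_obs_sigma[of "{Inl k}" "{Inr k}" "Z k" "K k"]
    measurable_obs_sigma[of "Inl k"] measurable_obs_sigma[of "Inr k"] by auto

lemma indep_var_past_current:
  assumes k: "1 \<le> k" and V: "V \<in> borel_measurable (past (k - 1))"
  shows "indep_var borel V borel (\<lambda>\<omega>. (Z k \<omega>, K k \<omega>))"
proof (rule indep_var_obs_sigma)
  show "V \<in> borel_measurable (obs_sigma (Inl ` {1..k - 1} \<union> Inr ` {1..k - 1}))"
    using V by (simp add: past_def)
  show "(\<lambda>\<omega>. (Z k \<omega>, K k \<omega>)) \<in> borel_measurable (obs_sigma {Inl k, Inr k})"
    using measurable_obs_sigma[of "Inl k" "{Inl k, Inr k}"] measurable_obs_sigma[of "Inr k" "{Inl k, Inr k}"]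
    by (auto intro: borel_measurable_Pair)
qed (use k in auto)

lemma SigmaTil_measurable_past:
  "\<zeta> \<in> SigmaTil M Z K lo hi \<Longrightarrow> 1 \<le> i \<Longrightarrow> \<zeta> i \<in> borel_measurable (past (i - 1))"
  unfolding SigmaTil_def by (auto simp: measurable_def sets_past)

lemma SigmaTil_measurable: "\<zeta> \<in> SigmaTil M Z K lo hi \<Longrightarrow> 1 \<le> i \<Longrightarrow> \<zeta> i \<in> borel_measurable M"
  using measurable_from_subalg[OF subalgebra_past SigmaTil_measurable_past] .

end

section \<open>Moment bounds for the controlled sums\<close>

locale iid_ZK = indep_ZK +
  fixes sigma2 k2 \<alpha> lo hi :: real
  assumes Z_ident: "\<And>i. i \<ge> 1 \<Longrightarrow> distr M borel (Z i) = distr M borel (Z 1)"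
    and K_ident: "\<And>i. i \<ge> 1 \<Longrightarrow> distr M borel (K i) = distr M borel (K 1)"
    and alpha: "0 < \<alpha>" "\<alpha> \<le> 1"
    and Z_moment: "integrable M (\<lambda>\<omega>. \<bar>Z 1 \<omega>\<bar> powr (2 + 2 * \<alpha>))"
    and K_moment: "integrable M (\<lambda>\<omega>. \<bar>K 1 \<omega>\<bar> powr (2 + 2 * \<alpha>))"
    and sigma2: "(\<integral>\<omega>. \<bar>Z 1 \<omega>\<bar>^2 \<partial>M) = sigma2" "sigma2 > 0"
    and K_mean: "(\<integral>\<omega>. K 1 \<omega> \<partial>M) = 0"
    and k2: "(\<integral>\<omega>. \<bar>K 1 \<omega>\<bar>^2 \<partial>M) = k2"
    and lo_hi: "0 < lo" "lo < hi"
begin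

lemma k2_nonneg: "0 \<le> k2"
  using k2 by (metis integral_nonneg_AE AE_I2 zero_le_power2)

lemma distr_Z_K_eq:
  assumes k: "1 \<le> k"
  shows "distr M borel (\<lambda>\<omega>. (Z k \<omega>, K k \<omega>)) = distr M borel (\<lambda>\<omega>. (Z 1 \<omega>, K 1 \<omega>))"
proof -
  have "distr M borel (\<lambda>\<omega>. (Z j \<omega>, K j \<omega>)) = distr M borel (Z j) \<Otimes>\<^sub>M distr M borel (K j)"
    if "1 \<le> j" for j
    using indep_var_Z_K[OF that] unfolding indep_var_distribution_eq by (simp add: borel_prod)
  from this[OF k] this[of 1] show ?thesis using Z_ident[OF k] K_ident[OF k] by simp
qed

text \<open>Conditioning on the past: \<open>(Z k, K k)\<close> is independent of \<^term>\<open>past (k - 1)\<close> and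
  distributed like \<open>(Z 1, K 1)\<close>, so a past-measurable \<open>V\<close> may be treated as a constant.\<close>

lemma integral_freeze_current:
  fixes V :: "'a \<Rightarrow> real \<times> real" and F :: "real \<times> real \<Rightarrow> real \<times> real \<Rightarrow> real"
  assumes k: "1 \<le> k" and V: "V \<in> borel_measurable (past (k - 1))"
    and F[measurable]: "case_prod F \<in> borel_measurable ((borel \<Otimes>\<^sub>M borel) \<Otimes>\<^sub>M (borel \<Otimes>\<^sub>M borel))"
    and int: "integrable M (\<lambda>\<omega>. F (V \<omega>) (Z k \<omega>, K k \<omega>))"
  shows "(\<integral>\<omega>. F (V \<omega>) (Z k \<omega>, K k \<omega>) \<partial>M) = (\<integral>\<omega>. (\<integral>\<omega>'. F (V \<omega>) (Z 1 \<omega>', K 1 \<omega>') \<partial>M) \<partial>M)"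
proof -
  have ZK1: "(\<lambda>\<omega>. (Z 1 \<omega>, K 1 \<omega>)) \<in> borel_measurable M"
    using Z_measurable K_measurable by (auto intro: borel_measurable_Pair)
  have "F v \<in> borel_measurable (borel \<Otimes>\<^sub>M borel)" for v
    using measurable_compose[OF measurable_Pair1'[of v "borel \<Otimes>\<^sub>M borel" "borel \<Otimes>\<^sub>M borel"] F]
    by (simp add: space_pair_measure)
  then have Fv: "F v \<in> borel_measurable borel" for v
    by (simp add: borel_prod)
  have "(\<integral>\<omega>. F (V \<omega>) (Z k \<omega>, K k \<omega>) \<partial>M)
      = (\<integral>\<omega>. (\<integral>y. F (V \<omega>) y \<partial>distr M borel (\<lambda>\<omega>. (Z k \<omega>, K k \<omega>))) \<partial>M)"
    using F int by (intro integral_indep_var_eq[OF indep_var_past_current[OF k V]]) (simp_all add: borel_prod)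
  also have "\<dots> = (\<integral>\<omega>. (\<integral>\<omega>'. F (V \<omega>) (Z 1 \<omega>', K 1 \<omega>') \<partial>M) \<partial>M)"
    unfolding distr_Z_K_eq[OF k] using integral_distr[OF ZK1 Fv] by simp
  finally show ?thesis .
qed

lemma
  assumes k: "1 \<le> k"
  shows integrable_Z_moment: "integrable M (\<lambda>\<omega>. \<bar>Z k \<omega>\<bar> powr (2 + 2 * \<alpha>))"
    and integral_Z_moment:
      "(\<integral>\<omega>. \<bar>Z k \<omega>\<bar> powr (2 + 2 * \<alpha>) \<partial>M) = (\<integral>\<omega>. \<bar>Z 1 \<omega>\<bar> powr (2 + 2 * \<alpha>) \<partial>M)"
    and integrable_K_moment: "integrable M (\<lambda>\<omega>. \<bar>K k \<omega>\<bar> powr (2 + 2 * \<alpha>))"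
    and integral_K_moment:
      "(\<integral>\<omega>. \<bar>K k \<omega>\<bar> powr (2 + 2 * \<alpha>) \<partial>M) = (\<integral>\<omega>. \<bar>K 1 \<omega>\<bar> powr (2 + 2 * \<alpha>) \<partial>M)"
proof -
  have f: "(\<lambda>x::real. \<bar>x\<bar> powr (2 + 2 * \<alpha>)) \<in> borel_measurable borel" by measurable
  note Z = Z_ident[OF k] Z_measurable[OF k] Z_measurable[of 1]
  note K = K_ident[OF k] K_measurable[OF k] K_measurable[of 1]
  show "integrable M (\<lambda>\<omega>. \<bar>Z k \<omega>\<bar> powr (2 + 2 * \<alpha>))"
    "(\<integral>\<omega>. \<bar>Z k \<omega>\<bar> powr (2 + 2 * \<alpha>) \<partial>M) = (\<integral>\<omega>. \<bar>Z 1 \<omega>\<bar> powr (2 + 2 * \<alpha>) \<partial>M)"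
    "integrable M (\<lambda>\<omega>. \<bar>K k \<omega>\<bar> powr (2 + 2 * \<alpha>))"
    "(\<integral>\<omega>. \<bar>K k \<omega>\<bar> powr (2 + 2 * \<alpha>) \<partial>M) = (\<integral>\<omega>. \<bar>K 1 \<omega>\<bar> powr (2 + 2 * \<alpha>) \<partial>M)"
    using identically_distributed_integrable_iff[OF Z f] identically_distributed_integral_eq[OF Z f]
      identically_distributed_integrable_iff[OF K f] identically_distributed_integral_eq[OF K f]
      Z_moment K_moment by simp_all
qed

lemma
  shows integrable_square_affine: "integrable M (\<lambda>\<omega>. (c * Z 1 \<omega> + K 1 \<omega>)\<^sup>2)"
    and integral_square_affine: "(\<integral>\<omega>. (c * Z 1 \<omega> + K 1 \<omega>)\<^sup>2 \<partial>M) = c\<^sup>2 * sigma2 + k2"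
proof -
  have moments: "2 \<le> 2 + 2 * \<alpha>" using alpha by simp
  note Z = integrable_low_moments[OF Z_moment Z_measurable[of 1] moments]
  note K = integrable_low_moments[OF K_moment K_measurable[of 1] moments]
  have ZK: "integrable M (\<lambda>\<omega>. Z 1 \<omega> * K 1 \<omega>)" "(\<integral>\<omega>. Z 1 \<omega> * K 1 \<omega> \<partial>M) = 0"
    using indep_var_integrable[OF indep_var_Z_K Z(1) K(1)]
      indep_var_lebesgue_integral[OF indep_var_Z_K Z(1) K(1)] K_mean by auto
  have expand: "(\<lambda>\<omega>. (c * Z 1 \<omega> + K 1 \<omega>)\<^sup>2)
      = (\<lambda>\<omega>. c\<^sup>2 * (Z 1 \<omega>)\<^sup>2 + 2 * c * (Z 1 \<omega> * K 1 \<omega>) + (K 1 \<omega>)\<^sup>2)"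
    by (simp add: fun_eq_iff power2_eq_square algebra_simps)
  show "integrable M (\<lambda>\<omega>. (c * Z 1 \<omega> + K 1 \<omega>)\<^sup>2)"
    unfolding expand using Z K ZK by simp
  show "(\<integral>\<omega>. (c * Z 1 \<omega> + K 1 \<omega>)\<^sup>2 \<partial>M) = c\<^sup>2 * sigma2 + k2"
    unfolding expand using Z K ZK sigma2(1) k2 by simp
qed

lemma
  assumes k: "1 \<le> k" and c: "c \<in> borel_measurable M" "\<And>\<omega>. \<omega> \<in> space M \<Longrightarrow> \<bar>c \<omega>\<bar> \<le> hi"
  shows integrable_square_affine_powr:
      "integrable M (\<lambda>\<omega>. \<bar>(c \<omega> * Z k \<omega> + K k \<omega>)\<^sup>2\<bar> powr (1 + \<alpha>))"
    and integral_square_affine_powr_le: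
      "(\<integral>\<omega>. \<bar>(c \<omega> * Z k \<omega> + K k \<omega>)\<^sup>2\<bar> powr (1 + \<alpha>) \<partial>M)
        \<le> 8 * hi powr (2 + 2 * \<alpha>) * (\<integral>\<omega>. \<bar>Z 1 \<omega>\<bar> powr (2 + 2 * \<alpha>) \<partial>M)
          + 8 * (\<integral>\<omega>. \<bar>K 1 \<omega>\<bar> powr (2 + 2 * \<alpha>) \<partial>M)"
proof -
  let ?f = "\<lambda>\<omega>. 8 * hi powr (2 + 2 * \<alpha>) * \<bar>Z k \<omega>\<bar> powr (2 + 2 * \<alpha>) + 8 * \<bar>K k \<omega>\<bar> powr (2 + 2 * \<alpha>)"
  have f: "integrable M ?f" using integrable_Z_moment[OF k] integrable_K_moment[OF k] by simp
  have le: "\<bar>(c \<omega> * Z k \<omega> + K k \<omega>)\<^sup>2\<bar> powr (1 + \<alpha>) \<le> ?f \<omega>" if "\<omega> \<in> space M" for \<omega>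
    by (rule square_affine_powr_le[OF c(2)[OF that] alpha])
  have "(\<lambda>\<omega>. \<bar>(c \<omega> * Z k \<omega> + K k \<omega>)\<^sup>2\<bar> powr (1 + \<alpha>)) \<in> borel_measurable M"
    using c(1) Z_measurable[OF k] K_measurable[OF k] by measurable
  then show int: "integrable M (\<lambda>\<omega>. \<bar>(c \<omega> * Z k \<omega> + K k \<omega>)\<^sup>2\<bar> powr (1 + \<alpha>))"
    using le by (intro integrable_bound_pointwise[OF f]) auto
  have "(\<integral>\<omega>. \<bar>(c \<omega> * Z k \<omega> + K k \<omega>)\<^sup>2\<bar> powr (1 + \<alpha>) \<partial>M) \<le> (\<integral>\<omega>. ?f \<omega> \<partial>M)"
    by (rule integral_mono[OF int f le])
  also have "\<dots> = 8 * hi powr (2 + 2 * \<alpha>) * (\<integral>\<omega>. \<bar>Z 1 \<omega>\<bar> powr (2 + 2 * \<alpha>) \<partial>M)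
          + 8 * (\<integral>\<omega>. \<bar>K 1 \<omega>\<bar> powr (2 + 2 * \<alpha>) \<partial>M)"
    using integrable_Z_moment[OF k] integrable_K_moment[OF k] integral_Z_moment[OF k]
      integral_K_moment[OF k] by simp
  finally show "(\<integral>\<omega>. \<bar>(c \<omega> * Z k \<omega> + K k \<omega>)\<^sup>2\<bar> powr (1 + \<alpha>) \<partial>M)
        \<le> 8 * hi powr (2 + 2 * \<alpha>) * (\<integral>\<omega>. \<bar>Z 1 \<omega>\<bar> powr (2 + 2 * \<alpha>) \<partial>M)
          + 8 * (\<integral>\<omega>. \<bar>K 1 \<omega>\<bar> powr (2 + 2 * \<alpha>) \<partial>M)" .
qed

lemma SigmaTil_abs_le: "\<zeta> \<in> SigmaTil M Z K lo hi \<Longrightarrow> 1 \<le> i \<Longrightarrow> \<omega> \<in> space M \<Longrightarrow> \<bar>\<zeta> i \<omega>\<bar> \<le> hi"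
  using SigmaTil_bounds[of \<zeta> M Z K lo hi i \<omega>] lo_hi by auto

definition Ctil :: real where
  "Ctil = (SUP \<zeta>\<in>SigmaTil M Z K lo hi. (\<integral>\<omega>. \<bar>Zzeta Z K \<zeta> 1 \<omega>\<bar> powr (1 + \<alpha>) \<partial>M))"

lemma integral_Zzeta_one_le:
  assumes "\<zeta> \<in> SigmaTil M Z K lo hi"
  shows "(\<integral>\<omega>. \<bar>Zzeta Z K \<zeta> 1 \<omega>\<bar> powr (1 + \<alpha>) \<partial>M)
    \<le> 8 * hi powr (2 + 2 * \<alpha>) * (\<integral>\<omega>. \<bar>Z 1 \<omega>\<bar> powr (2 + 2 * \<alpha>) \<partial>M)
      + 8 * (\<integral>\<omega>. \<bar>K 1 \<omega>\<bar> powr (2 + 2 * \<alpha>) \<partial>M)"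
  using integral_square_affine_powr_le[of 1 "\<zeta> 1"] SigmaTil_measurable[OF assms]
    SigmaTil_abs_le[OF assms] by (simp add: Zzeta_def)

lemma bdd_above_Ctil:
  "bdd_above ((\<lambda>\<zeta>. (\<integral>\<omega>. \<bar>Zzeta Z K \<zeta> 1 \<omega>\<bar> powr (1 + \<alpha>) \<partial>M)) ` SigmaTil M Z K lo hi)"
  using integral_Zzeta_one_le by (rule bdd_aboveI2)

lemma SigmaTil_nonempty: "SigmaTil M Z K lo hi \<noteq> {}"
  using const_mem_SigmaTil[of lo lo hi] lo_hi by auto

lemma Ctil_le:
  "Ctil \<le> 8 * hi powr (2 + 2 * \<alpha>) * (\<integral>\<omega>. \<bar>Z 1 \<omega>\<bar> powr (2 + 2 * \<alpha>) \<partial>M)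
      + 8 * (\<integral>\<omega>. \<bar>K 1 \<omega>\<bar> powr (2 + 2 * \<alpha>) \<partial>M)"
  unfolding Ctil_def using SigmaTil_nonempty integral_Zzeta_one_le by (rule cSUP_least)

lemma integral_const_control_le_Ctil:
  assumes "lo \<le> c" "c \<le> hi"
  shows "(\<integral>\<omega>. \<bar>(c * Z 1 \<omega> + K 1 \<omega>)\<^sup>2\<bar> powr (1 + \<alpha>) \<partial>M) \<le> Ctil"
  unfolding Ctil_def
  by (rule cSUP_upper2[OF bdd_above_Ctil const_mem_SigmaTil[OF assms]]) (simp add: Zzeta_def)

lemma Ctil_nonneg: "0 \<le> Ctil"
  using integral_const_control_le_Ctil[of lo] lo_hi
  by (smt (verit) integral_nonneg_AE AE_I2 powr_ge_zero)

text \<open>By \<open>integral_square_affine\<close>, \<^term>\<open>mean_sq c\<close> is the mean of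
  \<open>(c * Z i + K i)\<^sup>2\<close>, i.e. the conditional mean of \<open>Zzeta Z K \<zeta> i\<close> on \<open>\<zeta> i = c\<close>.\<close>

definition mean_sq :: "real \<Rightarrow> real" where
  "mean_sq c = c\<^sup>2 * sigma2 + k2"

lemma mean_sq_nonneg: "0 \<le> mean_sq c"
  using sigma2(2) k2_nonneg by (simp add: mean_sq_def)

lemma mean_sq_powr_le_Ctil:
  assumes c: "lo \<le> c" "c \<le> hi"
  shows "mean_sq c powr (1 + \<alpha>) \<le> Ctil"
proof -
  have "mean_sq c powr (1 + \<alpha>) = (\<integral>\<omega>. (c * Z 1 \<omega> + K 1 \<omega>)\<^sup>2 \<partial>M) powr (1 + \<alpha>)"
    using integral_square_affine[of c] by (simp add: mean_sq_def)
  also have "\<dots> \<le> (\<integral>\<omega>. ((c * Z 1 \<omega> + K 1 \<omega>)\<^sup>2) powr (1 + \<alpha>) \<partial>M)"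
    using integrable_square_affine integrable_square_affine_powr[of 1 "\<lambda>_. c"] c lo_hi alpha
    by (intro powr_expectation_le) auto
  also have "\<dots> \<le> Ctil" using integral_const_control_le_Ctil[OF c] by simp
  finally show ?thesis .
qed

definition mart_diff :: "(nat \<Rightarrow> 'a \<Rightarrow> real) \<Rightarrow> nat \<Rightarrow> 'a \<Rightarrow> real" where
  "mart_diff \<zeta> i \<omega> = Zzeta Z K \<zeta> i \<omega> - mean_sq (\<zeta> i \<omega>)"

definition mart_sum :: "(nat \<Rightarrow> 'a \<Rightarrow> real) \<Rightarrow> nat \<Rightarrow> 'a \<Rightarrow> real" where
  "mart_sum \<zeta> j \<omega> = (\<Sum>i=1..j. mart_diff \<zeta> i \<omega>)"

lemma mart_diff_measurable_past:
  assumes \<zeta>: "\<zeta> \<in> SigmaTil M Z K lo hi" and i: "1 \<le> i" "i \<le> j"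
  shows "mart_diff \<zeta> i \<in> borel_measurable (past j)"
proof -
  have [measurable]: "\<zeta> i \<in> borel_measurable (past j)"
    using measurable_from_subalg[OF subalgebra_past_mono SigmaTil_measurable_past[OF \<zeta> i(1)]] i
    by simp
  have [measurable]: "Z i \<in> borel_measurable (past j)" "K i \<in> borel_measurable (past j)"
    using Z_measurable_past[OF i] K_measurable_past[OF i] by auto
  show ?thesis unfolding mart_diff_def mean_sq_def Zzeta_def by measurable
qed

lemma mart_sum_measurable_past:
  "\<zeta> \<in> SigmaTil M Z K lo hi \<Longrightarrow> mart_sum \<zeta> j \<in> borel_measurable (past j)"
  unfolding mart_sum_def by (rule borel_measurable_sum) (auto intro: mart_diff_measurable_past)

lemma mart_diff_measurable: "\<zeta> \<in> SigmaTil M Z K lo hi \<Longrightarrow> 1 \<le> i \<Longrightarrow> mart_diff \<zeta> i \<in> borel_measurable M"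
  using measurable_from_subalg[OF subalgebra_past mart_diff_measurable_past] by blast

lemma mart_sum_measurable: "\<zeta> \<in> SigmaTil M Z K lo hi \<Longrightarrow> mart_sum \<zeta> j \<in> borel_measurable M"
  using measurable_from_subalg[OF subalgebra_past mart_sum_measurable_past] .

lemma control_state_measurable_past:
  "\<zeta> \<in> SigmaTil M Z K lo hi \<Longrightarrow> 1 \<le> k
    \<Longrightarrow> (\<lambda>\<omega>. (\<zeta> k \<omega>, mart_sum \<zeta> (k - 1) \<omega>)) \<in> borel_measurable (past (k - 1))"
  by (intro borel_measurable_Pair SigmaTil_measurable_past mart_sum_measurable_past)

lemma integral_Zzeta_powr_le_Ctil:
  assumes \<zeta>: "\<zeta> \<in> SigmaTil M Z K lo hi" and k: "1 \<le> k"
  shows "(\<integral>\<omega>. \<bar>Zzeta Z K \<zeta> k \<omega>\<bar> powr (1 + \<alpha>) \<partial>M) \<le> Ctil"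
proof -
  define F :: "real \<times> real \<Rightarrow> real \<times> real \<Rightarrow> real" where
    "F v y = \<bar>(fst v * fst y + snd y)\<^sup>2\<bar> powr (1 + \<alpha>)" for v y
  have F: "case_prod F \<in> borel_measurable ((borel \<Otimes>\<^sub>M borel) \<Otimes>\<^sub>M (borel \<Otimes>\<^sub>M borel))"
    unfolding F_def by measurable
  have "(\<integral>\<omega>. \<bar>Zzeta Z K \<zeta> k \<omega>\<bar> powr (1 + \<alpha>) \<partial>M)
      = (\<integral>\<omega>. F (\<zeta> k \<omega>, mart_sum \<zeta> (k - 1) \<omega>) (Z k \<omega>, K k \<omega>) \<partial>M)"
    by (simp add: F_def Zzeta_def)
  also have "\<dots> = (\<integral>\<omega>. (\<integral>\<omega>'. \<bar>(\<zeta> k \<omega> * Z 1 \<omega>' + K 1 \<omega>')\<^sup>2\<bar> powr (1 + \<alpha>) \<partial>M) \<partial>M)"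
    using integrable_square_affine_powr[OF k SigmaTil_measurable[OF \<zeta> k] SigmaTil_abs_le[OF \<zeta> k]]
    by (subst integral_freeze_current[OF k control_state_measurable_past[OF \<zeta> k] F])
      (simp_all add: F_def)
  also have "\<dots> \<le> Ctil"
    by (rule integral_le_nonneg_const[OF _ Ctil_nonneg])
      (use integral_const_control_le_Ctil SigmaTil_bounds[OF \<zeta> k] in auto)
  finally show ?thesis .
qed

lemma
  assumes \<zeta>: "\<zeta> \<in> SigmaTil M Z K lo hi" and k: "1 \<le> k"
  shows integrable_mart_diff_powr: "integrable M (\<lambda>\<omega>. \<bar>mart_diff \<zeta> k \<omega>\<bar> powr (1 + \<alpha>))"
    and integral_mart_diff_powr_le: "(\<integral>\<omega>. \<bar>mart_diff \<zeta> k \<omega>\<bar> powr (1 + \<alpha>) \<partial>M) \<le> 2 * Ctil"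
proof -
  let ?X = "\<lambda>\<omega>. \<bar>Zzeta Z K \<zeta> k \<omega>\<bar> powr (1 + \<alpha>)" and ?m = "\<lambda>\<omega>. mean_sq (\<zeta> k \<omega>) powr (1 + \<alpha>)"
  have [measurable]: "\<zeta> k \<in> borel_measurable M" "mart_diff \<zeta> k \<in> borel_measurable M"
    using SigmaTil_measurable[OF \<zeta> k] mart_diff_measurable[OF \<zeta> k] by auto
  have X: "integrable M ?X"
    using integrable_square_affine_powr[OF k SigmaTil_measurable[OF \<zeta> k] SigmaTil_abs_le[OF \<zeta> k]]
    by (simp add: Zzeta_def)
  have m_le: "?m \<omega> \<le> Ctil" if "\<omega> \<in> space M" for \<omega>
    using mean_sq_powr_le_Ctil SigmaTil_bounds[OF \<zeta> k that] by blast
  have m: "integrable M ?m"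
  proof (rule integrable_bound_pointwise)
    show "integrable M (\<lambda>_. Ctil)" by simp
    show "?m \<in> borel_measurable M" unfolding mean_sq_def by measurable
  qed (use m_le in auto)
  have le: "\<bar>mart_diff \<zeta> k \<omega>\<bar> powr (1 + \<alpha>) \<le> ?X \<omega> + ?m \<omega>" for \<omega>
    using abs_diff_powr_le[of "1 + \<alpha>" "Zzeta Z K \<zeta> k \<omega>" "mean_sq (\<zeta> k \<omega>)"] alpha mean_sq_nonneg
    by (simp add: mart_diff_def Zzeta_def)
  show int: "integrable M (\<lambda>\<omega>. \<bar>mart_diff \<zeta> k \<omega>\<bar> powr (1 + \<alpha>))"
  proof (rule integrable_bound_pointwise)
    show "integrable M (\<lambda>\<omega>. ?X \<omega> + ?m \<omega>)" using X m by simp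
  qed (use le in auto)
  have "(\<integral>\<omega>. \<bar>mart_diff \<zeta> k \<omega>\<bar> powr (1 + \<alpha>) \<partial>M) \<le> (\<integral>\<omega>. ?X \<omega> + ?m \<omega> \<partial>M)"
    using int X m le by (intro integral_mono) auto
  also have "\<dots> = (\<integral>\<omega>. ?X \<omega> \<partial>M) + (\<integral>\<omega>. ?m \<omega> \<partial>M)"
    using X m by simp
  also have "\<dots> \<le> Ctil + Ctil"
    using integral_Zzeta_powr_le_Ctil[OF \<zeta> k] integral_le_nonneg_const[OF m_le Ctil_nonneg]
    by (rule add_mono)
  finally show "(\<integral>\<omega>. \<bar>mart_diff \<zeta> k \<omega>\<bar> powr (1 + \<alpha>) \<partial>M) \<le> 2 * Ctil" by simp
qed

lemma
  assumes \<zeta>: "\<zeta> \<in> SigmaTil M Z K lo hi" and k: "1 \<le> k"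
    and S: "integrable M (\<lambda>\<omega>. \<bar>mart_sum \<zeta> (k - 1) \<omega>\<bar> powr (1 + \<alpha>))"
  shows integrable_cross_term:
      "integrable M (\<lambda>\<omega>. signed_powr \<alpha> (mart_sum \<zeta> (k - 1) \<omega>) * mart_diff \<zeta> k \<omega>)"
    and integral_cross_term:
      "(\<integral>\<omega>. signed_powr \<alpha> (mart_sum \<zeta> (k - 1) \<omega>) * mart_diff \<zeta> k \<omega> \<partial>M) = 0"
proof -
  have [measurable]: "mart_sum \<zeta> (k - 1) \<in> borel_measurable M" "mart_diff \<zeta> k \<in> borel_measurable M"
    using mart_sum_measurable[OF \<zeta>] mart_diff_measurable[OF \<zeta> k] by auto
  show int: "integrable M (\<lambda>\<omega>. signed_powr \<alpha> (mart_sum \<zeta> (k - 1) \<omega>) * mart_diff \<zeta> k \<omega>)"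
  proof (rule integrable_bound_pointwise)
    show "integrable M (\<lambda>\<omega>. \<bar>mart_sum \<zeta> (k - 1) \<omega>\<bar> powr (1 + \<alpha>) + \<bar>mart_diff \<zeta> k \<omega>\<bar> powr (1 + \<alpha>))"
      using S integrable_mart_diff_powr[OF \<zeta> k] by simp
    show "(\<lambda>\<omega>. signed_powr \<alpha> (mart_sum \<zeta> (k - 1) \<omega>) * mart_diff \<zeta> k \<omega>) \<in> borel_measurable M"
      by measurable
  qed (use abs_signed_powr_mult_le[of "1 + \<alpha>"] alpha in auto)
  define F :: "real \<times> real \<Rightarrow> real \<times> real \<Rightarrow> real" where
    "F v y = signed_powr \<alpha> (snd v) * ((fst v * fst y + snd y)\<^sup>2 - mean_sq (fst v))" for v y
  have F: "case_prod F \<in> borel_measurable ((borel \<Otimes>\<^sub>M borel) \<Otimes>\<^sub>M (borel \<Otimes>\<^sub>M borel))"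
    unfolding F_def mean_sq_def by measurable
  have "(\<integral>\<omega>. signed_powr \<alpha> (mart_sum \<zeta> (k - 1) \<omega>) * mart_diff \<zeta> k \<omega> \<partial>M)
      = (\<integral>\<omega>. F (\<zeta> k \<omega>, mart_sum \<zeta> (k - 1) \<omega>) (Z k \<omega>, K k \<omega>) \<partial>M)"
    by (simp add: F_def mart_diff_def Zzeta_def)
  also have "\<dots> = (\<integral>\<omega>. (\<integral>\<omega>'. signed_powr \<alpha> (mart_sum \<zeta> (k - 1) \<omega>)
      * ((\<zeta> k \<omega> * Z 1 \<omega>' + K 1 \<omega>')\<^sup>2 - mean_sq (\<zeta> k \<omega>)) \<partial>M) \<partial>M)"
    using int by (subst integral_freeze_current[OF k control_state_measurable_past[OF \<zeta> k] F])
      (simp_all add: F_def mart_diff_def Zzeta_def)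
  also have "\<dots> = 0"
    using integrable_square_affine integral_square_affine by (simp add: mean_sq_def prob_space)
  finally show "(\<integral>\<omega>. signed_powr \<alpha> (mart_sum \<zeta> (k - 1) \<omega>) * mart_diff \<zeta> k \<omega> \<partial>M) = 0" .
qed

text \<open>In the step \<open>S (j + 1) = S j + D (j + 1)\<close> of \<open>abs_add_powr_le\<close> the cross
  term has mean zero, so each step adds at most \<open>2 * 2 * Ctil\<close>.\<close>

lemma mart_sum_moment_le:
  assumes \<zeta>: "\<zeta> \<in> SigmaTil M Z K lo hi"
  shows "integrable M (\<lambda>\<omega>. \<bar>mart_sum \<zeta> j \<omega>\<bar> powr (1 + \<alpha>))
    \<and> (\<integral>\<omega>. \<bar>mart_sum \<zeta> j \<omega>\<bar> powr (1 + \<alpha>) \<partial>M) \<le> 4 * real j * Ctil"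
proof (induction j)
  case 0
  then show ?case by (simp add: mart_sum_def)
next
  case (Suc j)
  let ?p = "1 + \<alpha>" and ?S = "mart_sum \<zeta> j" and ?D = "mart_diff \<zeta> (Suc j)"
  let ?R = "\<lambda>\<omega>. \<bar>?S \<omega>\<bar> powr ?p + ?p * (signed_powr \<alpha> (?S \<omega>) * ?D \<omega>) + 2 * \<bar>?D \<omega>\<bar> powr ?p"
  have k: "1 \<le> Suc j" by simp
  have S: "integrable M (\<lambda>\<omega>. \<bar>?S \<omega>\<bar> powr ?p)" "(\<integral>\<omega>. \<bar>?S \<omega>\<bar> powr ?p \<partial>M) \<le> 4 * real j * Ctil"
    using Suc.IH by auto
  note D = integrable_mart_diff_powr[OF \<zeta> k] integral_mart_diff_powr_le[OF \<zeta> k]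
  note cross = integrable_cross_term[OF \<zeta> k] integral_cross_term[OF \<zeta> k]
  have R: "integrable M ?R" using S D cross by simp
  have step: "mart_sum \<zeta> (Suc j) \<omega> = ?S \<omega> + ?D \<omega>" for \<omega>
    by (simp add: mart_sum_def)
  have le: "\<bar>mart_sum \<zeta> (Suc j) \<omega>\<bar> powr ?p \<le> ?R \<omega>" for \<omega>
    using abs_add_powr_le[of ?p "?S \<omega>" "?D \<omega>"] alpha by (simp add: step algebra_simps)
  have [measurable]: "mart_sum \<zeta> (Suc j) \<in> borel_measurable M" by (rule mart_sum_measurable[OF \<zeta>])
  have int: "integrable M (\<lambda>\<omega>. \<bar>mart_sum \<zeta> (Suc j) \<omega>\<bar> powr ?p)"
    by (rule integrable_bound_pointwise[OF R]) (use le in auto)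
  have "(\<integral>\<omega>. \<bar>mart_sum \<zeta> (Suc j) \<omega>\<bar> powr ?p \<partial>M) \<le> (\<integral>\<omega>. ?R \<omega> \<partial>M)"
    using int R le by (intro integral_mono) auto
  also have "\<dots> = (\<integral>\<omega>. \<bar>?S \<omega>\<bar> powr ?p \<partial>M) + 2 * (\<integral>\<omega>. \<bar>?D \<omega>\<bar> powr ?p \<partial>M)"
    using S D cross by simp
  also have "\<dots> \<le> 4 * real (Suc j) * Ctil"
    using S(2) D(2) by (simp add: algebra_simps)
  finally show ?case using int by simp
qed

definition avg_mean_sq :: "(nat \<Rightarrow> 'a \<Rightarrow> real) \<Rightarrow> nat \<Rightarrow> 'a \<Rightarrow> real" where
  "avg_mean_sq \<zeta> n \<omega> = (\<Sum>i=1..n. mean_sq (\<zeta> i \<omega>)) / real n"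

lemma Wnn_minus_avg_mean_sq: "Wnn Z K \<zeta> n \<omega> - avg_mean_sq \<zeta> n \<omega> = mart_sum \<zeta> n \<omega> / real n"
  unfolding Wnn_def avg_mean_sq_def mart_sum_def mart_diff_def
  by (simp add: sum_subtractf diff_divide_distrib)

lemma mean_sq_mem:
  assumes "lo \<le> c" "c \<le> hi"
  shows "mean_sq c \<in> {sigma2 * lo\<^sup>2 + k2 .. sigma2 * hi\<^sup>2 + k2}"
  using assms lo_hi sigma2(2) power_mono[of lo c 2] power_mono[of c hi 2]
  by (simp add: mean_sq_def mult.commute)

lemma mean_sq_surj:
  assumes "r \<in> {sigma2 * lo\<^sup>2 + k2 .. sigma2 * hi\<^sup>2 + k2}"
  obtains c where "lo \<le> c" "c \<le> hi" "mean_sq c = r"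
proof
  define q where "q = (r - k2) / sigma2"
  have q: "lo\<^sup>2 \<le> q" "q \<le> hi\<^sup>2" using assms sigma2(2) by (auto simp: q_def field_simps)
  show "lo \<le> sqrt q" using q(1) by (rule real_le_rsqrt)
  show "sqrt q \<le> hi" using real_sqrt_le_mono[OF q(2)] lo_hi by simp
  show "mean_sq (sqrt q) = r"
    using q(1) sigma2(2) order_trans[OF zero_le_power2 q(1)] by (simp add: mean_sq_def q_def)
qed

lemma avg_mean_sq_mem:
  assumes \<zeta>: "\<zeta> \<in> SigmaTil M Z K lo hi" and n: "1 \<le> n" and \<omega>: "\<omega> \<in> space M"
  shows "avg_mean_sq \<zeta> n \<omega> \<in> {sigma2 * lo\<^sup>2 + k2 .. sigma2 * hi\<^sup>2 + k2}"
proof -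
  have m: "mean_sq (\<zeta> i \<omega>) \<in> {sigma2 * lo\<^sup>2 + k2 .. sigma2 * hi\<^sup>2 + k2}" if "i \<in> {1..n}" for i
    using that SigmaTil_bounds[OF \<zeta> _ \<omega>] by (intro mean_sq_mem) auto
  have "real (card {1..n}) * (sigma2 * lo\<^sup>2 + k2) \<le> (\<Sum>i=1..n. mean_sq (\<zeta> i \<omega>))"
    using m by (intro sum_bounded_below) auto
  moreover have "(\<Sum>i=1..n. mean_sq (\<zeta> i \<omega>)) \<le> real (card {1..n}) * (sigma2 * hi\<^sup>2 + k2)"
    using m by (intro sum_bounded_above) auto
  ultimately show ?thesis using n by (simp add: avg_mean_sq_def field_simps)
qed

lemma avg_mean_sq_measurable:
  assumes \<zeta>: "\<zeta> \<in> SigmaTil M Z K lo hi"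
  shows "avg_mean_sq \<zeta> n \<in> borel_measurable M"
proof -
  have "(\<lambda>\<omega>. mean_sq (\<zeta> i \<omega>)) \<in> borel_measurable M" if "i \<in> {1..n}" for i
  proof -
    have [measurable]: "\<zeta> i \<in> borel_measurable M" using SigmaTil_measurable[OF \<zeta>] that by simp
    show ?thesis unfolding mean_sq_def by measurable
  qed
  then show ?thesis unfolding avg_mean_sq_def by (intro borel_measurable_divide borel_measurable_sum) auto
qed

lemma integrable_avg_mean_sq:
  assumes \<zeta>: "\<zeta> \<in> SigmaTil M Z K lo hi" and n: "1 \<le> n"
  shows "integrable M (avg_mean_sq \<zeta> n)"
proof (rule integrable_bound_pointwise)
  show "integrable M (\<lambda>_. sigma2 * hi\<^sup>2 + k2)" by simp
  show "avg_mean_sq \<zeta> n \<in> borel_measurable M" by (rule avg_mean_sq_measurable[OF \<zeta>])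
  have "0 \<le> sigma2 * lo\<^sup>2 + k2" using sigma2(2) k2_nonneg by simp
  then show "\<bar>avg_mean_sq \<zeta> n \<omega>\<bar> \<le> sigma2 * hi\<^sup>2 + k2" if "\<omega> \<in> space M" for \<omega>
    using avg_mean_sq_mem[OF \<zeta> n that] by auto
qed

lemma
  assumes \<zeta>: "\<zeta> \<in> SigmaTil M Z K lo hi" and n: "1 \<le> n"
  shows integrable_abs_Wnn_minus_avg:
      "integrable M (\<lambda>\<omega>. \<bar>Wnn Z K \<zeta> n \<omega> - avg_mean_sq \<zeta> n \<omega>\<bar>)"
    and integral_abs_Wnn_minus_avg_le:
      "(\<integral>\<omega>. \<bar>Wnn Z K \<zeta> n \<omega> - avg_mean_sq \<zeta> n \<omega>\<bar> \<partial>M) \<le> (4 * Ctil / real n powr \<alpha>) powr (1 / (1 + \<alpha>))"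
proof -
  have S: "integrable M (\<lambda>\<omega>. \<bar>mart_sum \<zeta> n \<omega>\<bar> powr (1 + \<alpha>))"
      "(\<integral>\<omega>. \<bar>mart_sum \<zeta> n \<omega>\<bar> powr (1 + \<alpha>) \<partial>M) \<le> 4 * real n * Ctil"
    using mart_sum_moment_le[OF \<zeta>] by auto
  have p: "1 \<le> 1 + \<alpha>" using alpha by simp
  note root = integral_abs_le_moment_root[OF p mart_sum_measurable[OF \<zeta>] S(1)]
  show "integrable M (\<lambda>\<omega>. \<bar>Wnn Z K \<zeta> n \<omega> - avg_mean_sq \<zeta> n \<omega>\<bar>)"
    unfolding Wnn_minus_avg_mean_sq using root(1) by simp
  have "(\<integral>\<omega>. \<bar>Wnn Z K \<zeta> n \<omega> - avg_mean_sq \<zeta> n \<omega>\<bar> \<partial>M) = (\<integral>\<omega>. \<bar>mart_sum \<zeta> n \<omega>\<bar> \<partial>M) / real n"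
    unfolding Wnn_minus_avg_mean_sq by simp
  also have "\<dots> \<le> (4 * real n * Ctil) powr (1 / (1 + \<alpha>)) / real n"
  proof (rule divide_right_mono)
    have "(\<integral>\<omega>. \<bar>mart_sum \<zeta> n \<omega>\<bar> powr (1 + \<alpha>) \<partial>M) powr (1 / (1 + \<alpha>))
        \<le> (4 * real n * Ctil) powr (1 / (1 + \<alpha>))"
      using S(2) alpha by (intro powr_mono2) auto
    with root(2) show "(\<integral>\<omega>. \<bar>mart_sum \<zeta> n \<omega>\<bar> \<partial>M) \<le> (4 * real n * Ctil) powr (1 / (1 + \<alpha>))"
      by linarith
  qed simp
  also have "\<dots> = (4 * Ctil / real n powr \<alpha>) powr (1 / (1 + \<alpha>))"
    using n Ctil_nonneg alpha by (intro powr_rate_eq) auto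
  finally show "(\<integral>\<omega>. \<bar>Wnn Z K \<zeta> n \<omega> - avg_mean_sq \<zeta> n \<omega>\<bar> \<partial>M)
      \<le> (4 * Ctil / real n powr \<alpha>) powr (1 / (1 + \<alpha>))" .
qed

lemma integrable_Wnn:
  assumes \<zeta>: "\<zeta> \<in> SigmaTil M Z K lo hi" and n: "1 \<le> n"
  shows "integrable M (Wnn Z K \<zeta> n)"
proof -
  have "Wnn Z K \<zeta> n = (\<lambda>\<omega>. mart_sum \<zeta> n \<omega> / real n + avg_mean_sq \<zeta> n \<omega>)"
    using Wnn_minus_avg_mean_sq by (auto simp: fun_eq_iff algebra_simps)
  moreover have "integrable M (mart_sum \<zeta> n)"
  proof (rule integrable_abs_cancel)
    show "integrable M (\<lambda>\<omega>. \<bar>mart_sum \<zeta> n \<omega>\<bar>)"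
      by (rule integral_abs_le_moment_root(1)[of "1 + \<alpha>", OF _ mart_sum_measurable[OF \<zeta>]])
        (use mart_sum_moment_le[OF \<zeta>, of n] alpha in auto)
  qed (rule mart_sum_measurable[OF \<zeta>])
  ultimately show ?thesis using integrable_avg_mean_sq[OF \<zeta> n] by simp
qed

lemma integral_lipschitz_Wnn_le:
  fixes \<phi> :: "real \<Rightarrow> real"
  assumes lip: "L-lipschitz_on UNIV \<phi>" and \<zeta>: "\<zeta> \<in> SigmaTil M Z K lo hi" and n: "1 \<le> n"
  shows "(\<integral>\<omega>. \<phi> (Wnn Z K \<zeta> n \<omega>) \<partial>M)
    \<le> (SUP r\<in>{sigma2 * lo\<^sup>2 + k2 .. sigma2 * hi\<^sup>2 + k2}. \<phi> r)
      + L * (4 * Ctil / real n powr \<alpha>) powr (1 / (1 + \<alpha>))"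
proof -
  let ?I = "{sigma2 * lo\<^sup>2 + k2 .. sigma2 * hi\<^sup>2 + k2}"
  note int = integrable_lipschitz_comp[OF lip finite_measure_axioms]
  have W: "integrable M (\<lambda>\<omega>. \<phi> (Wnn Z K \<zeta> n \<omega>))" by (rule int[OF integrable_Wnn[OF \<zeta> n]])
  have A: "integrable M (\<lambda>\<omega>. \<phi> (avg_mean_sq \<zeta> n \<omega>))" by (rule int[OF integrable_avg_mean_sq[OF \<zeta> n]])
  have "(\<integral>\<omega>. \<phi> (Wnn Z K \<zeta> n \<omega>) \<partial>M)
      \<le> (\<integral>\<omega>. \<phi> (avg_mean_sq \<zeta> n \<omega>) \<partial>M) + L * (\<integral>\<omega>. \<bar>Wnn Z K \<zeta> n \<omega> - avg_mean_sq \<zeta> n \<omega>\<bar> \<partial>M)"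
    using abs_integral_lipschitz_diff_le[OF lip W A integrable_abs_Wnn_minus_avg[OF \<zeta> n]] by linarith
  also have "(\<integral>\<omega>. \<phi> (avg_mean_sq \<zeta> n \<omega>) \<partial>M) \<le> (SUP r\<in>?I. \<phi> r)"
    using A avg_mean_sq_mem[OF \<zeta> n] bdd_above_lipschitz_image_Icc[OF lip]
    by (intro integral_le_const AE_I2 cSUP_upper) auto
  also have "L * (\<integral>\<omega>. \<bar>Wnn Z K \<zeta> n \<omega> - avg_mean_sq \<zeta> n \<omega>\<bar> \<partial>M)
      \<le> L * (4 * Ctil / real n powr \<alpha>) powr (1 / (1 + \<alpha>))"
    using integral_abs_Wnn_minus_avg_le[OF \<zeta> n] lipschitz_on_nonneg[OF lip] by (rule mult_left_mono)
  finally show ?thesis by simp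
qed

lemma lipschitz_le_integral_Wnn_const:
  fixes \<phi> :: "real \<Rightarrow> real"
  assumes lip: "L-lipschitz_on UNIV \<phi>" and n: "1 \<le> n"
    and r: "r \<in> {sigma2 * lo\<^sup>2 + k2 .. sigma2 * hi\<^sup>2 + k2}"
  obtains \<zeta> where "\<zeta> \<in> SigmaTil M Z K lo hi"
    "\<phi> r \<le> (\<integral>\<omega>. \<phi> (Wnn Z K \<zeta> n \<omega>) \<partial>M) + L * (4 * Ctil / real n powr \<alpha>) powr (1 / (1 + \<alpha>))"
proof -
  obtain c where c: "lo \<le> c" "c \<le> hi" "mean_sq c = r" using mean_sq_surj[OF r] .
  define \<zeta> where "\<zeta> = (\<lambda>(i::nat) (\<omega>::'a). c)"
  have \<zeta>: "\<zeta> \<in> SigmaTil M Z K lo hi" unfolding \<zeta>_def using c(1,2) by (rule const_mem_SigmaTil)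
  have avg: "avg_mean_sq \<zeta> n = (\<lambda>_. r)" using n c by (simp add: fun_eq_iff avg_mean_sq_def \<zeta>_def)
  note int = integrable_lipschitz_comp[OF lip finite_measure_axioms]
  have "\<phi> r - (\<integral>\<omega>. \<phi> (Wnn Z K \<zeta> n \<omega>) \<partial>M) \<le> L * (\<integral>\<omega>. \<bar>Wnn Z K \<zeta> n \<omega> - r\<bar> \<partial>M)"
    using abs_integral_lipschitz_diff_le[OF lip int[OF integrable_Wnn[OF \<zeta> n]], of "\<lambda>_. r"]
      integrable_abs_Wnn_minus_avg[OF \<zeta> n] by (simp add: avg prob_space)
  also have "\<dots> \<le> L * (4 * Ctil / real n powr \<alpha>) powr (1 / (1 + \<alpha>))"
    using integral_abs_Wnn_minus_avg_le[OF \<zeta> n] lipschitz_on_nonneg[OF lip]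
    by (intro mult_left_mono) (simp_all add: avg)
  finally show ?thesis using that[OF \<zeta>] by simp
qed

lemma abs_SUP_integral_Wnn_minus_SUP_le:
  fixes \<phi> :: "real \<Rightarrow> real"
  assumes lip: "L-lipschitz_on UNIV \<phi>" and n: "1 \<le> n"
  shows "\<bar>(SUP \<zeta>\<in>SigmaTil M Z K lo hi. (\<integral>\<omega>. \<phi> (Wnn Z K \<zeta> n \<omega>) \<partial>M))
      - (SUP r\<in>{sigma2 * lo\<^sup>2 + k2 .. sigma2 * hi\<^sup>2 + k2}. \<phi> r)\<bar>
    \<le> L * (4 * Ctil / real n powr \<alpha>) powr (1 / (1 + \<alpha>))"
proof (rule abs_SUP_diff_le[OF SigmaTil_nonempty _ bdd_above_lipschitz_image_Icc[OF lip]])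
  show "{sigma2 * lo\<^sup>2 + k2 .. sigma2 * hi\<^sup>2 + k2} \<noteq> {}"
    using mean_sq_mem[of hi] lo_hi by auto
next
  fix \<zeta> assume "\<zeta> \<in> SigmaTil M Z K lo hi"
  then show "(\<integral>\<omega>. \<phi> (Wnn Z K \<zeta> n \<omega>) \<partial>M)
      \<le> (SUP r\<in>{sigma2 * lo\<^sup>2 + k2 .. sigma2 * hi\<^sup>2 + k2}. \<phi> r)
        + L * (4 * Ctil / real n powr \<alpha>) powr (1 / (1 + \<alpha>))"
    by (rule integral_lipschitz_Wnn_le[OF lip _ n])
next
  fix r assume "r \<in> {sigma2 * lo\<^sup>2 + k2 .. sigma2 * hi\<^sup>2 + k2}"
  then obtain \<zeta> where "\<zeta> \<in> SigmaTil M Z K lo hi"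
    "\<phi> r \<le> (\<integral>\<omega>. \<phi> (Wnn Z K \<zeta> n \<omega>) \<partial>M) + L * (4 * Ctil / real n powr \<alpha>) powr (1 / (1 + \<alpha>))"
    by (rule lipschitz_le_integral_Wnn_const[OF lip n])
  then show "\<exists>\<zeta>\<in>SigmaTil M Z K lo hi. \<phi> r
      \<le> (\<integral>\<omega>. \<phi> (Wnn Z K \<zeta> n \<omega>) \<partial>M) + L * (4 * Ctil / real n powr \<alpha>) powr (1 / (1 + \<alpha>))"
    by blast
qed

end

theorem theorem3p1:
  fixes M :: "'a measure" and Z K :: "nat \<Rightarrow> 'a \<Rightarrow> real"
    and sigma2 k2 \<alpha> lo hi L :: real and \<phi> :: "real \<Rightarrow> real" and n :: nat
  assumes "prob_space M"
    and Zrv: "\<And>i. i \<ge> 1 \<Longrightarrow> Z i \<in> borel_measurable M"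
    and Krv: "\<And>i. i \<ge> 1 \<Longrightarrow> K i \<in> borel_measurable M"
    and indep: "prob_space.indep_vars M (\<lambda>_. borel)
                  (\<lambda>x. case x of Inl i \<Rightarrow> Z i | Inr i \<Rightarrow> K i)
                  (Inl ` {1..} \<union> Inr ` {1..})"
    and Zid: "\<And>i. i \<ge> 1 \<Longrightarrow> distr M borel (Z i) = distr M borel (Z 1)"
    and Kid: "\<And>i. i \<ge> 1 \<Longrightarrow> distr M borel (K i) = distr M borel (K 1)"
    and alpha: "0 < \<alpha>" "\<alpha> \<le> 1"
    and Zmom: "integrable M (\<lambda>\<omega>. \<bar>Z 1 \<omega>\<bar> powr (2 + 2 * \<alpha>))"
    and Kmom: "integrable M (\<lambda>\<omega>. \<bar>K 1 \<omega>\<bar> powr (2 + 2 * \<alpha>))"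
    and sigma2: "(\<integral>\<omega>. \<bar>Z 1 \<omega>\<bar>^2 \<partial>M) = sigma2" "sigma2 > 0"
    and Kmean: "(\<integral>\<omega>. K 1 \<omega> \<partial>M) = 0"
    and k2: "(\<integral>\<omega>. \<bar>K 1 \<omega>\<bar>^2 \<partial>M) = k2" "k2 > 0"
    and zeta: "0 < lo" "lo < hi"
    and lip: "L-lipschitz_on UNIV \<phi>"
    and n: "n \<ge> 1"
  shows "\<bar>(SUP \<zeta>\<in>SigmaTil M Z K lo hi. (\<integral>\<omega>. \<phi> (Wnn Z K \<zeta> n \<omega>) \<partial>M))
           - (SUP r\<in>{sigma2 * lo^2 + k2 .. sigma2 * hi^2 + k2}. \<phi> r)\<bar>
         \<le> L * (4 * (SUP \<zeta>\<in>SigmaTil M Z K lo hi. (\<integral>\<omega>. \<bar>Zzeta Z K \<zeta> 1 \<omega>\<bar> powr (1 + \<alpha>) \<partial>M))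
                 / real n powr \<alpha>) powr (1 / (1 + \<alpha>))
       \<and> bdd_above ((\<lambda>\<zeta>. (\<integral>\<omega>. \<bar>Zzeta Z K \<zeta> 1 \<omega>\<bar> powr (1 + \<alpha>) \<partial>M)) ` SigmaTil M Z K lo hi)
       \<and> (SUP \<zeta>\<in>SigmaTil M Z K lo hi. (\<integral>\<omega>. \<bar>Zzeta Z K \<zeta> 1 \<omega>\<bar> powr (1 + \<alpha>) \<partial>M))
           \<le> 8 * hi powr (2 + 2 * \<alpha>) * (\<integral>\<omega>. \<bar>Z 1 \<omega>\<bar> powr (2 + 2 * \<alpha>) \<partial>M)
             + 8 * (\<integral>\<omega>. \<bar>K 1 \<omega>\<bar> powr (2 + 2 * \<alpha>) \<partial>M)"
proof -
  interpret iid_ZK M Z K sigma2 k2 \<alpha> lo hi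
    by (intro iid_ZK.intro indep_ZK.intro iid_ZK_axioms.intro indep_ZK_axioms.intro) (fact assms)+
  show ?thesis
    using abs_SUP_integral_Wnn_minus_SUP_le[OF lip n] bdd_above_Ctil Ctil_le
    unfolding Ctil_def by (intro conjI) assumption+
qed

end
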